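(* Let $H$ be a complex Hilbert space, $V=\mathcal{L}(H)_{sa}$, $r$ a positive integer and $a,b\in\mathfrak{M}(r)$, the set of projections of rank $r$ in $V$. Then $b\in\mathcal{O}_a$ if and only if $a\in\mathcal{O}_b$.
   Context: $V$ is the set of self-adjoint bounded operators on $H$; a projection is $a=a^2=a^*$. For $a\in\mathfrak{M}(r)$, $V_1(a)=aVa$ is a Jordan algebra (product $x\circ y=\frac12(xy+yx)$) with unit $a$, and the antipodal set of $a$ is $\mathcal{O}_a=\{b\in\mathfrak{M}(r): aba\text{ is not invertible in }V_1(a)\}$. *)

theory Defs
  imports "HOL-Analysis.Analysis"
begin

text \<open>A complex Hilbert space: a real Banach space with a complex scalar
multiplication extending the real one and a complex inner product
(conjugate-linear in the first argument) inducing the norm.\<close>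

class chilbert = banach +
  fixes hscaleC :: "complex \<Rightarrow> 'a \<Rightarrow> 'a"
    and hinner :: "'a \<Rightarrow> 'a \<Rightarrow> complex"
  assumes hscaleC_of_real: "hscaleC (complex_of_real t) x = t *\<^sub>R x"
    and hscaleC_add_right: "hscaleC c (x + y) = hscaleC c x + hscaleC c y"
    and hscaleC_add_left: "hscaleC (c + d) x = hscaleC c x + hscaleC d x"
    and hscaleC_mult: "hscaleC c (hscaleC d x) = hscaleC (c * d) x"
    and hinner_cnj: "hinner x y = cnj (hinner y x)"
    and hinner_add_left: "hinner (x + y) z = hinner x z + hinner y z"
    and hinner_scaleC_left: "hinner (hscaleC c x) y = cnj c * hinner x y"
    and norm_hinner: "norm x = sqrt (Re (hinner x x))"

definition bounded_clin :: "('a::chilbert \<Rightarrow> 'a) \<Rightarrow> bool" where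
  "bounded_clin f \<longleftrightarrow>
     (\<forall>x y. f (x + y) = f x + f y) \<and>
     (\<forall>c x. f (hscaleC c x) = hscaleC c (f x)) \<and>
     (\<exists>K. \<forall>x. norm (f x) \<le> norm x * K)"

definition SA :: "('a::chilbert \<Rightarrow> 'a) set" where
  "SA = {f. bounded_clin f \<and> (\<forall>x y. hinner (f x) y = hinner x (f y))}"

definition cindep :: "'a::chilbert set \<Rightarrow> bool" where
  "cindep B \<longleftrightarrow> (\<forall>c. (\<Sum>v\<in>B. hscaleC (c v) v) = 0 \<longrightarrow> (\<forall>v\<in>B. c v = 0))"

definition cspan_fin :: "'a::chilbert set \<Rightarrow> 'a set" where
  "cspan_fin B = {(\<Sum>v\<in>B. hscaleC (c v) v) | c. True}"

definition has_rank :: "('a::chilbert \<Rightarrow> 'a) \<Rightarrow> nat \<Rightarrow> bool" where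
  "has_rank f r \<longleftrightarrow>
     (\<exists>B. finite B \<and> card B = r \<and> cindep B \<and> range f = cspan_fin B)"

definition projs :: "nat \<Rightarrow> ('a::chilbert \<Rightarrow> 'a) set" where
  "projs r = {a \<in> SA. a \<circ> a = a \<and> has_rank a r}"

definition jprod :: "('a::chilbert \<Rightarrow> 'a) \<Rightarrow> ('a \<Rightarrow> 'a) \<Rightarrow> ('a \<Rightarrow> 'a)" where
  "jprod x y = (\<lambda>v. (1/2::real) *\<^sub>R (x (y v) + y (x v)))"

definition V1 :: "('a::chilbert \<Rightarrow> 'a) \<Rightarrow> ('a \<Rightarrow> 'a) set" where
  "V1 a = {a \<circ> x \<circ> a | x. x \<in> SA}"

definition jinvertible_in :: "('a::chilbert \<Rightarrow> 'a) set \<Rightarrow> ('a \<Rightarrow> 'a) \<Rightarrow> ('a \<Rightarrow> 'a) \<Rightarrow> bool" where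
  "jinvertible_in J e x \<longleftrightarrow> (\<exists>y\<in>J. jprod x y = e \<and> jprod (jprod x x) y = x)"

definition antipodal :: "nat \<Rightarrow> ('a::chilbert \<Rightarrow> 'a) \<Rightarrow> ('a \<Rightarrow> 'a) set" where
  "antipodal r a = {b \<in> projs r. \<not> jinvertible_in (V1 a) a (a \<circ> b \<circ> a)}"

end

theory Submission
  imports Defs
begin

(* In a corner V_1(e) = eVe of a projection e, Jordan invertibility is ordinary invertibility
   with unit e. So if bab has an inverse t in bVb, then t(bab) = b makes a injective on the range
   of b; both ranges have complex dimension r, hence a maps range b onto range a, and a t^2 a is
   an inverse of aba in aVa. The statement is symmetric in a and b. *)

lemma hscaleC_zero_left [simp]: "hscaleC 0 (x::'a::chilbert) = 0"
  by (metis hscaleC_of_real of_real_0 scaleR_zero_left)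

lemma hscaleC_one [simp]: "hscaleC 1 (x::'a::chilbert) = x"
  by (metis hscaleC_of_real of_real_1 scaleR_one)

lemma hscaleC_minus_one [simp]: "hscaleC (-1) (x::'a::chilbert) = - x"
  by (metis hscaleC_of_real of_real_1 of_real_minus scaleR_minus1_left)

lemma hscaleC_Re_Im: "hscaleC c (v::'a::chilbert) = Re c *\<^sub>R v + Im c *\<^sub>R hscaleC \<i> v"
proof -
  have "c = complex_of_real (Re c) + complex_of_real (Im c) * \<i>"
    by (simp add: complex_eq_iff)
  then show ?thesis
    by (metis hscaleC_add_left hscaleC_mult hscaleC_of_real)
qed

lemma inj_hscaleC_i: "inj (hscaleC \<i> :: 'a::chilbert \<Rightarrow> 'a)"
  by (rule inj_on_inverseI[of _ "hscaleC (- \<i>)"]) (simp add: hscaleC_mult)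

lemma hinner_zero_left [simp]: "hinner (0::'a::chilbert) x = 0"
proof -
  have "hinner (0::'a) x = hinner 0 x + hinner 0 x"
    by (metis add_0 hinner_add_left)
  then show ?thesis by simp
qed

lemma hinner_zero_right [simp]: "hinner x (0::'a::chilbert) = 0"
  by (metis complex_cnj_zero hinner_cnj hinner_zero_left)

lemma hinner_self_eq_zeroD: "hinner x x = 0 \<Longrightarrow> (x::'a::chilbert) = 0"
  using norm_hinner[of x] by simp

lemma bounded_clin_add: "bounded_clin f \<Longrightarrow> f (x + y) = f x + f y"
  unfolding bounded_clin_def by blast

lemma bounded_clin_hscaleC: "bounded_clin f \<Longrightarrow> f (hscaleC c x) = hscaleC c (f x)"
  unfolding bounded_clin_def by blast

lemma bounded_clin_linear: "bounded_clin f \<Longrightarrow> linear f"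
  by (intro linearI) (simp_all add: bounded_clin_add bounded_clin_hscaleC flip: hscaleC_of_real)

lemma bounded_clin_comp:
  assumes "bounded_clin f" and "bounded_clin g"
  shows "bounded_clin (f \<circ> g)"
proof -
  obtain K where K: "\<And>x. norm (f x) \<le> norm x * K"
    using assms(1) unfolding bounded_clin_def by blast
  obtain L where L: "\<And>x. norm (g x) \<le> norm x * L"
    using assms(2) unfolding bounded_clin_def by blast
  have "norm (f (g x)) \<le> norm x * (max L 0 * max K 0)" for x
  proof -
    have "norm (f (g x)) \<le> norm (g x) * max K 0"
      by (meson K max.cobounded1 mult_left_mono norm_ge_zero order_trans)
    also have "\<dots> \<le> norm x * max L 0 * max K 0"
      by (meson L max.cobounded1 max.cobounded2 mult_left_mono mult_right_mono norm_ge_zero order_trans)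
    finally show ?thesis by (simp add: mult.assoc)
  qed
  with assms show ?thesis
    unfolding bounded_clin_def by auto
qed

lemma bounded_clin_id: "bounded_clin (id :: 'a::chilbert \<Rightarrow> 'a)"
  unfolding bounded_clin_def by (auto intro: exI[of _ 1])

lemma SA_bounded_clin: "f \<in> SA \<Longrightarrow> bounded_clin f"
  unfolding SA_def by blast

lemma SA_hinner_adjoint: "f \<in> SA \<Longrightarrow> hinner (f x) y = hinner x (f y)"
  unfolding SA_def by blast

lemma SA_sandwich: "p \<in> SA \<Longrightarrow> q \<in> SA \<Longrightarrow> p \<circ> q \<circ> p \<in> SA"
  unfolding SA_def by (auto intro!: bounded_clin_comp)

lemma id_SA: "id \<in> SA"
  unfolding SA_def by (simp add: bounded_clin_id)

lemma V1_subset_SA: "a \<in> SA \<Longrightarrow> V1 a \<subseteq> SA"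
  unfolding V1_def by (auto intro: SA_sandwich)

lemma V1_absorbs_projection:
  assumes "a \<circ> a = a" and "x \<in> V1 a"
  shows "a \<circ> x = x" and "x \<circ> a = x"
proof -
  obtain z where "x = a \<circ> z \<circ> a"
    using assms(2) unfolding V1_def by blast
  with assms(1) show "a \<circ> x = x" and "x \<circ> a = x"
    by (metis comp_assoc)+
qed

lemma jprod_self: "jprod x x = x \<circ> x"
  unfolding jprod_def by (auto simp flip: scaleR_2)

lemma jprod_eq_iff: "jprod x y = e \<longleftrightarrow> (\<forall>v. x (y v) + y (x v) = 2 *\<^sub>R e v)"
  unfolding jprod_def fun_eq_iff
  by (metis scaleR_half_double scaleR_scaleR real_scaleR_def field_sum_of_halves scaleR_2)

lemma jinvertible_in_if_inverse:
  assumes "y \<in> J" and "x \<circ> y = e" and "y \<circ> x = e" and "x \<circ> e = x" and "e \<circ> x = x"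
  shows "jinvertible_in J e x"
proof -
  have "x (y v) = e v" "y (x v) = e v" "x (e v) = x v" "e (x v) = x v" for v
    using assms(2-) by (metis comp_apply)+
  then have "jprod x y = e" and "jprod (jprod x x) y = x"
    unfolding jprod_eq_iff jprod_self by (simp_all add: scaleR_2)
  with assms(1) show ?thesis
    unfolding jinvertible_in_def by blast
qed

lemma jordan_inverse_is_inverse:
  fixes e x y :: "'a::chilbert \<Rightarrow> 'a"
  assumes "e \<in> SA" and "x \<in> SA" and "y \<in> SA"
    and "e \<circ> e = e" and "x \<circ> e = x" and "e \<circ> x = x"
    and "jprod x y = e" and "jprod (jprod x x) y = x"
  shows "x \<circ> y = e" and "y \<circ> x = e"
proof -
  have lin: "linear e" "linear x" "linear y"
    using assms(1-3) by (simp_all add: SA_bounded_clin bounded_clin_linear)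
  have ee: "e (e v) = e v" and xe: "x (e v) = x v" and ex: "e (x v) = x v" for v
    using assms(4-6) by (metis comp_apply)+
  have unit: "x (y v) + y (x v) = 2 *\<^sub>R e v" for v
    using assms(7) by (simp add: jprod_eq_iff)
  have square: "x (x (y v)) + y (x (x v)) = 2 *\<^sub>R x v" for v
    using assms(8) by (simp add: jprod_eq_iff jprod_self)
  have xxy: "x (x (y v)) = x v" for v
  proof -
    have left: "x (x (y v)) + x (y (x v)) = 2 *\<^sub>R x v"
      using arg_cong[OF unit[of v], of x] lin(2) by (simp add: linear_add linear_scale xe)
    have right: "x (y (x v)) + y (x (x v)) = 2 *\<^sub>R x v"
      using unit[of "x v"] by (simp add: ex)
    have "2 *\<^sub>R x (x (y v)) =
        (x (x (y v)) + x (y (x v))) - (x (y (x v)) + y (x (x v))) + (x (x (y v)) + y (x (x v)))"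
      by (simp add: scaleR_2 algebra_simps)
    also have "\<dots> = 2 *\<^sub>R x v"
      by (simp only: left right square) simp
    finally show ?thesis by simp
  qed
  \<comment> \<open>x is injective on the range of e: if x w = 0 there, then x y w = 2 w is killed by x,
    and self-adjointness forces x y w = 0.\<close>
  have x_inj: "w = 0" if "x w = 0" and "e w = w" for w
  proof -
    have xyw: "x (y w) = 2 *\<^sub>R w"
      using unit[of w] that lin(3) by (simp add: linear_0)
    then have "x (x (y w)) = 0"
      using that lin(2) by (simp add: linear_scale)
    then have "hinner (x (y w)) (x (y w)) = 0"
      using SA_hinner_adjoint[OF assms(2)] by simp
    then have "x (y w) = 0"
      by (rule hinner_self_eq_zeroD)
    with xyw show "w = 0" by simp
  qed
  have "x (y v) = e v" for v
    using x_inj[of "x (y v) - e v"] lin(1,2) by (simp add: linear_diff xxy xe ex ee)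
  then show "x \<circ> y = e" and "y \<circ> x = e"
    using unit by (auto simp: fun_eq_iff scaleR_2)
qed

lemma jinvertible_in_V1_iff:
  assumes "e \<in> SA" and "e \<circ> e = e" and "x \<in> V1 e"
  shows "jinvertible_in (V1 e) e x \<longleftrightarrow> (\<exists>y\<in>V1 e. x \<circ> y = e \<and> y \<circ> x = e)"
proof
  assume "jinvertible_in (V1 e) e x"
  then obtain y where y: "y \<in> V1 e" "jprod x y = e" "jprod (jprod x x) y = x"
    unfolding jinvertible_in_def by blast
  have "x \<in> SA" and "y \<in> SA"
    using V1_subset_SA[OF assms(1)] assms(3) y(1) by blast+
  with y assms show "\<exists>y\<in>V1 e. x \<circ> y = e \<and> y \<circ> x = e"
    using jordan_inverse_is_inverse V1_absorbs_projection by metis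
next
  assume "\<exists>y\<in>V1 e. x \<circ> y = e \<and> y \<circ> x = e"
  with assms show "jinvertible_in (V1 e) e x"
    using jinvertible_in_if_inverse V1_absorbs_projection by metis
qed

lemma sum_hscaleC_single:
  assumes "finite B" and "v \<in> B"
  shows "(\<Sum>u\<in>B. hscaleC (if u = v then k else 0) u) = hscaleC k (v::'a::chilbert)"
proof -
  have "(\<Sum>u\<in>B. hscaleC (if u = v then k else 0) u) = (\<Sum>u\<in>B. if u = v then hscaleC k u else 0)"
    by (rule sum.cong) auto
  with assms show ?thesis
    by simp
qed

lemma cspan_finI: "x = (\<Sum>v\<in>B. hscaleC (c v) v) \<Longrightarrow> x \<in> cspan_fin B"
  unfolding cspan_fin_def by blast

lemma hscaleC_in_cspan_fin: "finite B \<Longrightarrow> v \<in> B \<Longrightarrow> hscaleC k v \<in> cspan_fin B"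
  using sum_hscaleC_single by (metis cspan_finI)

lemma subspace_cspan_fin: "subspace (cspan_fin (B::'a::chilbert set))"
  unfolding subspace_def
proof (intro conjI ballI allI)
  show "0 \<in> cspan_fin B"
    by (rule cspan_finI[of _ "\<lambda>_. 0"]) simp
next
  fix x y assume "x \<in> cspan_fin B" and "y \<in> cspan_fin B"
  then obtain c d where "x = (\<Sum>v\<in>B. hscaleC (c v) v)" and "y = (\<Sum>v\<in>B. hscaleC (d v) v)"
    unfolding cspan_fin_def by blast
  then have "x + y = (\<Sum>v\<in>B. hscaleC (c v + d v) v)"
    by (simp add: hscaleC_add_left sum.distrib)
  then show "x + y \<in> cspan_fin B"
    by (rule cspan_finI)
next
  fix t :: real and x assume "x \<in> cspan_fin B"
  then obtain c where "x = (\<Sum>v\<in>B. hscaleC (c v) v)"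
    unfolding cspan_fin_def by blast
  then have "t *\<^sub>R x = (\<Sum>v\<in>B. t *\<^sub>R hscaleC (c v) v)"
    by (simp add: scaleR_sum_right)
  also have "\<dots> = (\<Sum>v\<in>B. hscaleC (complex_of_real t * c v) v)"
    by (simp add: hscaleC_mult flip: hscaleC_of_real)
  finally show "t *\<^sub>R x \<in> cspan_fin B"
    by (rule cspan_finI)
qed

lemma cspan_fin_eq_span:
  assumes "finite B"
  shows "cspan_fin B = span (B \<union> hscaleC \<i> ` (B::'a::chilbert set))"
proof
  show "cspan_fin B \<subseteq> span (B \<union> hscaleC \<i> ` B)"
  proof
    fix x assume "x \<in> cspan_fin B"
    then obtain c where x: "x = (\<Sum>v\<in>B. hscaleC (c v) v)"
      unfolding cspan_fin_def by blast
    have "hscaleC (c v) v \<in> span (B \<union> hscaleC \<i> ` B)" if "v \<in> B" for v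
      unfolding hscaleC_Re_Im[of "c v"] using that
      by (intro span_add span_scale span_base) auto
    then show "x \<in> span (B \<union> hscaleC \<i> ` B)"
      unfolding x by (intro span_sum) auto
  qed
next
  have "B \<union> hscaleC \<i> ` B \<subseteq> cspan_fin B"
    using hscaleC_in_cspan_fin[OF assms, of _ 1] hscaleC_in_cspan_fin[OF assms] by auto
  then show "span (B \<union> hscaleC \<i> ` B) \<subseteq> cspan_fin B"
    using subspace_cspan_fin span_minimal by blast
qed

lemma cindep_disjoint_hscaleC_i:
  assumes "finite B" and "cindep (B::'a::chilbert set)"
  shows "B \<inter> hscaleC \<i> ` B = {}"
proof (rule ccontr)
  assume "B \<inter> hscaleC \<i> ` B \<noteq> {}"
  then obtain v w where vw: "v \<in> B" "w \<in> B" "hscaleC \<i> v = w"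
    by blast
  define c where "c u = (if u = v then \<i> else 0) + (if u = w then -1 else 0)" for u
  have "(\<Sum>u\<in>B. hscaleC (c u) u) = hscaleC \<i> v + hscaleC (-1) w"
    unfolding c_def hscaleC_add_left sum.distrib
    using sum_hscaleC_single[OF assms(1) vw(1)] sum_hscaleC_single[OF assms(1) vw(2)] by simp
  also have "\<dots> = 0"
    using vw by simp
  finally have "c v = 0"
    using assms(2) vw unfolding cindep_def by blast
  then show False
    unfolding c_def by (auto simp: complex_eq_iff split: if_splits)
qed

lemma cindep_imp_independent:
  assumes "finite B" and "cindep (B::'a::chilbert set)"
  shows "independent (B \<union> hscaleC \<i> ` B)"
proof (rule real_vector.independent_if_scalars_zero)
  show "finite (B \<union> hscaleC \<i> ` B)"
    using assms(1) by simp
next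
  fix f :: "'a \<Rightarrow> real" and w
  assume sum0: "(\<Sum>w\<in>B \<union> hscaleC \<i> ` B. f w *\<^sub>R w) = 0" and w: "w \<in> B \<union> hscaleC \<i> ` B"
  have "(\<Sum>w\<in>B \<union> hscaleC \<i> ` B. f w *\<^sub>R w)
      = (\<Sum>v\<in>B. f v *\<^sub>R v) + (\<Sum>w\<in>hscaleC \<i> ` B. f w *\<^sub>R w)"
    using assms(1) cindep_disjoint_hscaleC_i[OF assms] by (simp add: sum.union_disjoint)
  also have "\<dots> = (\<Sum>v\<in>B. f v *\<^sub>R v) + (\<Sum>v\<in>B. f (hscaleC \<i> v) *\<^sub>R hscaleC \<i> v)"
    using sum.reindex[OF inj_on_subset[OF inj_hscaleC_i subset_UNIV, of B]] by simp
  also have "\<dots> = (\<Sum>v\<in>B. hscaleC (Complex (f v) (f (hscaleC \<i> v))) v)"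
    by (simp only: hscaleC_Re_Im[of "Complex _ _"] complex.sel sum.distrib)
  finally have "(\<Sum>v\<in>B. hscaleC (Complex (f v) (f (hscaleC \<i> v))) v) = 0"
    using sum0 by simp
  then have "\<forall>v\<in>B. Complex (f v) (f (hscaleC \<i> v)) = 0"
    using assms(2)[unfolded cindep_def, THEN spec, of "\<lambda>v. Complex (f v) (f (hscaleC \<i> v))"] by simp
  with w show "f w = 0"
    by (auto simp: complex_eq_iff)
qed

lemma has_rank_real_basis:
  assumes "has_rank f r"
  obtains C where "finite C" and "independent C" and "card C = 2 * r" and "range f = span C"
proof -
  obtain B where B: "finite B" "card B = r" "cindep B" "range f = cspan_fin B"
    using assms unfolding has_rank_def by blast
  have "card (hscaleC \<i> ` B) = r"
    using B(2) card_image[OF inj_on_subset[OF inj_hscaleC_i subset_UNIV]] by blast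
  then have "card (B \<union> hscaleC \<i> ` B) = 2 * r"
    using B(1,2) card_Un_disjoint[OF B(1) _ cindep_disjoint_hscaleC_i[OF B(1,3)]] by simp
  then show thesis
    using B(1,4) cindep_imp_independent[OF B(1,3)] cspan_fin_eq_span[OF B(1)]
    by (intro that[of "B \<union> hscaleC \<i> ` B"]) simp_all
qed

lemma span_eq_if_independent_card_ge:
  assumes "finite C" and "independent D" and "D \<subseteq> span C" and "card C \<le> card D"
  shows "span D = span C"
proof -
  have "C \<subseteq> span D"
  proof
    fix c assume "c \<in> C"
    show "c \<in> span D"
    proof (rule ccontr)
      assume c: "c \<notin> span D"
      have "independent (insert c D)"
        using independent_insertI[OF c assms(2)] .
      moreover have "insert c D \<subseteq> span C"
        using assms(3) \<open>c \<in> C\<close> span_base by blast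
      ultimately have "card (insert c D) \<le> card C"
        using independent_span_bound[OF assms(1)] by blast
      moreover have "finite D"
        using independent_span_bound[OF assms(1-3)] by blast
      moreover have "c \<notin> D"
        using c span_base by blast
      ultimately show False
        using assms(4) by simp
    qed
  qed
  then show ?thesis
    using assms(3) by (simp add: span_minimal subset_antisym)
qed

lemma image_range_eq_if_inj_on_same_rank:
  assumes "has_rank f r" and "has_rank g r" and "linear h"
    and "inj_on h (range g)" and "h ` range g \<subseteq> range f"
  shows "h ` range g = range f"
proof -
  obtain Cf where Cf: "finite Cf" "independent Cf" "card Cf = 2 * r" "range f = span Cf"
    by (rule has_rank_real_basis[OF assms(1)])
  obtain Cg where Cg: "finite Cg" "independent Cg" "card Cg = 2 * r" "range g = span Cg"
    by (rule has_rank_real_basis[OF assms(2)])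
  have "independent (h ` Cg)"
    using linear_independent_injective_image[OF assms(3) Cg(2)] assms(4) Cg(4) by simp
  moreover have "card (h ` Cg) = card Cg"
    using Cg(4) span_superset by (intro card_image inj_on_subset[OF assms(4)]) blast
  moreover have "h ` Cg \<subseteq> span Cf"
    using assms(5) Cf(4) Cg(4) span_superset by blast
  ultimately have "span (h ` Cg) = span Cf"
    using Cf(1,3) Cg(3) by (intro span_eq_if_independent_card_ge) simp_all
  then show ?thesis
    using Cf(4) Cg(4) span_linear_image[OF assms(3)] by simp
qed

text \<open>With A the restriction of a to range b, b a b and a b a act on the ranges as A* A and
  A A*, so the inverse A (A* A)^-2 A* of A A* is a t^2 a.\<close>

lemma sandwich_inverse_transfer:
  fixes a b t :: "'a \<Rightarrow> 'a"
  assumes "a \<circ> a = a" and "t \<circ> b = t" and "b \<circ> t = t"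
    and "b \<circ> a \<circ> b \<circ> t = b" and "t \<circ> (b \<circ> a \<circ> b) = b"
    and "a ` range b = range a"
  shows "(a \<circ> b \<circ> a) \<circ> (a \<circ> (t \<circ> t) \<circ> a) = a"
    and "(a \<circ> (t \<circ> t) \<circ> a) \<circ> (a \<circ> b \<circ> a) = a"
proof -
  have aa: "a (a v) = a v" for v
    using fun_cong[OF assms(1)] by simp
  have tb: "t (b v) = t v" for v
    using fun_cong[OF assms(2)] by simp
  have bt: "b (t v) = t v" for v
    using fun_cong[OF assms(3)] by simp
  have right: "b (a (b (t v))) = b v" for v
    using fun_cong[OF assms(4)] by simp
  have left: "t (b (a (b v))) = b v" for v
    using fun_cong[OF assms(5)] by simp
  have ata: "a (t (a v)) = a v" for v
  proof -
    have "a v \<in> a ` range b"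
      using assms(6) by simp
    then obtain w where w: "a v = a (b w)"
      by blast
    have "t (a (b w)) = b w"
      using left[of w] tb by simp
    then show ?thesis
      using w by simp
  qed
  have "a (b (a (a (t (t (a v)))))) = a v" for v
  proof -
    have "a (b (a (a (t (t (a v)))))) = a (b (a (b (t (t (a v))))))"
      by (simp only: aa bt)
    also have "\<dots> = a (t (a v))"
      using right[of "t (a v)"] by (simp add: bt)
    finally show ?thesis
      by (simp only: ata)
  qed
  moreover have "a (t (t (a (a (b (a v)))))) = a v" for v
  proof -
    have "a (t (t (a (a (b (a v)))))) = a (t (t (b (a (b (a v))))))"
      by (simp only: aa tb)
    also have "\<dots> = a (t (a v))"
      using left[of "a v"] by (simp add: tb)
    finally show ?thesis
      by (simp only: ata)
  qed
  ultimately show "(a \<circ> b \<circ> a) \<circ> (a \<circ> (t \<circ> t) \<circ> a) = a"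
    and "(a \<circ> (t \<circ> t) \<circ> a) \<circ> (a \<circ> b \<circ> a) = a"
    by (simp_all add: fun_eq_iff)
qed

lemma sandwich_in_V1: "x \<in> SA \<Longrightarrow> a \<circ> x \<circ> a \<in> V1 a"
  unfolding V1_def by blast

lemma jinvertible_sandwich_swap:
  fixes a b :: "'h::chilbert \<Rightarrow> 'h"
  assumes "a \<in> projs r" and "b \<in> projs r"
    and "jinvertible_in (V1 b) b (b \<circ> a \<circ> b)"
  shows "jinvertible_in (V1 a) a (a \<circ> b \<circ> a)"
proof -
  have a: "a \<in> SA" "a \<circ> a = a" "has_rank a r" and b: "b \<in> SA" "b \<circ> b = b" "has_rank b r"
    using assms(1,2) unfolding projs_def by auto
  obtain t where t: "t \<in> V1 b" "b \<circ> a \<circ> b \<circ> t = b" "t \<circ> (b \<circ> a \<circ> b) = b"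
    using assms(3) jinvertible_in_V1_iff[OF b(1,2) sandwich_in_V1[OF a(1)]] by blast
  have tb: "t \<circ> b = t" "b \<circ> t = t"
    using V1_absorbs_projection[OF b(2) t(1)] by simp_all
  have "inj_on a (range b)"
  proof (rule inj_on_inverseI[of _ "t \<circ> b"])
    fix p assume "p \<in> range b"
    then obtain q where "p = b q" by blast
    then show "(t \<circ> b) (a p) = p"
      using fun_cong[OF t(3), of q] by simp
  qed
  then have "a ` range b = range a"
    using image_range_eq_if_inj_on_same_rank[OF a(3) b(3)]
      bounded_clin_linear[OF SA_bounded_clin[OF a(1)]] by blast
  then have "(a \<circ> b \<circ> a) \<circ> (a \<circ> (t \<circ> t) \<circ> a) = a"
    and "(a \<circ> (t \<circ> t) \<circ> a) \<circ> (a \<circ> b \<circ> a) = a"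
    using sandwich_inverse_transfer[OF a(2) tb t(2,3)] by simp_all
  moreover have "t \<circ> t \<in> SA"
    using SA_sandwich[OF _ id_SA, of t] V1_subset_SA[OF b(1)] t(1) by auto
  ultimately show ?thesis
    using jinvertible_in_V1_iff[OF a(1,2) sandwich_in_V1[OF b(1)]] sandwich_in_V1 by blast
qed

theorem corollary4p9:
  fixes a b :: "'h::chilbert \<Rightarrow> 'h" and r :: nat
  assumes "r > 0" and "a \<in> projs r" and "b \<in> projs r"
  shows "b \<in> antipodal r a \<longleftrightarrow> a \<in> antipodal r b"
  \<comment> \<open>The argument works for every rank.\<close>
  using jinvertible_sandwich_swap[OF assms(2,3)] jinvertible_sandwich_swap[OF assms(3,2)] assms(2,3)
  unfolding antipodal_def by blast

end
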